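(* Let $\mathcal{E}$ be the 2D Laplace equation $u_{xx}+u_{yy}=0$, with cotangent equation $\{u_{xx}+u_{yy}=0,\ p_{xx}+p_{yy}=0\}$. Then each of the following is a variational bivector on $\mathcal{E}$: $B_0=p$, $B_1=p_{yy}$, $B_2=p_{xy}$, $B_3=p_y+2(xp_{xy}+yp_{yy})$, $B_4=p_x+2(yp_{xy}-xp_{yy})$, $B_5=u_{yy}p_y-u_{xy}p_x+2(u_yp_{yy}-u_xp_{xy})$, $B_6=u_{yy}p_x+u_{xy}p_y+2(u_yp_{xy}+u_xp_{yy})$, $B_7=(u_y+xu_{xy}+yu_{yy})p_x+(u_x+yu_{xy}-xu_{yy})p_y+2(yu_x-xu_y)p_{yy}+2(xu_x+yu_y)p_{xy}$, $B_8=-(u_x+yu_{xy}-xu_{yy})p_x+(u_y+xu_{xy}+yu_{yy})p_y+2(xu_x+yu_y)p_{yy}-2(yu_x-xu_y)p_{xy}$.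
   Context: Setting: a scalar PDE $\mathcal{E}=\{F=0\}$ for one unknown $u(x^1,\dots,x^n)$, regarded as a submanifold of the infinite jet space with coordinates $x^i$, $u_\sigma$ ($\sigma$ a multi-index). $D_i$ are total derivatives, $D_\sigma$ their compositions. A $\mathcal{C}$-differential operator is an operator of the form $\sum_\sigma a^\sigma D_\sigma$ with smooth coefficients on the jet space (or on $\mathcal{E}$). The linearization is $\ell_F=\sum_\sigma \frac{\partial F}{\partial u_\sigma}D_\sigma$ and $\ell_{\mathcal{E}}$ its restriction to $\mathcal{E}$; $\Delta^*$ denotes the formal adjoint ($(\sum a^\sigma D_\sigma)^*=\sum(-1)^{|\sigma|}D_\sigma\circ a^\sigma$). The cotangent equation $\mathcal{T}^*\mathcal{E}$ is the system $\{F=0,\ \ell_F(p)=0\}$ (with all differential consequences), where $p$ is a new unknown of odd parity, so that all $p_\sigma$ are odd (anticommuting). Variational bivector: a $\mathcal{C}$-differential operator $H=\sum_\sigma h^\sigma D_\sigma$ on $\mathcal{E}$ such that (i) $\ell_{\mathcal{E}}(H_u)=0$ on $\mathcal{T}^*\mathcal{E}$, where $H_u=H(p)=\sum_\sigma h^\sigma p_\sigma$; and (ii) $H^*\circ\ell_{\mathcal{E}}^*=\ell_{\mathcal{E}}\circ H$ as operators on $\mathcal{E}$. Bivectors are identified with their functions $H_u$ (so "$B=\sum B_\sigma p_\sigma$" means $B=\sum B_\sigma D_\sigma$). *)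

theory Defs
  imports "HOL-Analysis.Analysis"
begin

text \<open>Coordinates of the (extended) infinite jet space: x, y, u_(i,j) = d^(i+j) u / dx^i dy^j,
  and p_(i,j). A point of the jet space is a real valuation of all coordinates.\<close>

datatype coord = CX | CY | CU nat nat | CP nat nat

type_synonym jpt = "coord \<Rightarrow> real"
type_synonym jfun = "jpt \<Rightarrow> real"

definition jx :: jfun where "jx \<xi> = \<xi> CX"
definition jy :: jfun where "jy \<xi> = \<xi> CY"
definition ju :: "nat \<Rightarrow> nat \<Rightarrow> jfun" where "ju i j \<xi> = \<xi> (CU i j)"
definition jp :: "nat \<Rightarrow> nat \<Rightarrow> jfun" where "jp i j \<xi> = \<xi> (CP i j)"

definition pd :: "coord \<Rightarrow> jfun \<Rightarrow> jfun" where
  "pd c f = (\<lambda>\<xi>. deriv (\<lambda>t. f (\<xi>(c := t))) (\<xi> c))"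

definition smooth_fn :: "jfun \<Rightarrow> bool" where
  "smooth_fn f \<longleftrightarrow>
     (\<exists>S. finite S \<and> (\<forall>\<xi> \<eta>. (\<forall>c\<in>S. \<xi> c = \<eta> c) \<longrightarrow> f \<xi> = f \<eta>)) \<and>
     (\<forall>cs. continuous_on UNIV (foldr pd cs f) \<and>
        (\<forall>c \<xi>. (\<lambda>t. foldr pd cs f (\<xi>(c := t))) differentiable (at (\<xi> c))))"

definition indep_p :: "jfun \<Rightarrow> bool" where
  "indep_p f \<longleftrightarrow> (\<forall>\<xi> \<eta>. (\<forall>c. (\<forall>i j. c \<noteq> CP i j) \<longrightarrow> \<xi> c = \<eta> c) \<longrightarrow> f \<xi> = f \<eta>)"

definition tdir_x :: "jpt \<Rightarrow> jpt" where
  "tdir_x \<xi> = (\<lambda>c. case c of CX \<Rightarrow> 1 | CY \<Rightarrow> 0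
                  | CU i j \<Rightarrow> \<xi> (CU (Suc i) j) | CP i j \<Rightarrow> \<xi> (CP (Suc i) j))"

definition tdir_y :: "jpt \<Rightarrow> jpt" where
  "tdir_y \<xi> = (\<lambda>c. case c of CX \<Rightarrow> 0 | CY \<Rightarrow> 1
                  | CU i j \<Rightarrow> \<xi> (CU i (Suc j)) | CP i j \<Rightarrow> \<xi> (CP i (Suc j)))"

text \<open>For smooth f (finitely many coordinates), the directional derivative along the
  prolonged direction equals D_x f = f_x + sum u_(sigma+x) f_(u_sigma) + sum p_(sigma+x) f_(p_sigma).\<close>
definition Dx :: "jfun \<Rightarrow> jfun" where
  "Dx f = (\<lambda>\<xi>. deriv (\<lambda>t. f (\<lambda>c. \<xi> c + t * tdir_x \<xi> c)) 0)"

definition Dy :: "jfun \<Rightarrow> jfun" where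
  "Dy f = (\<lambda>\<xi>. deriv (\<lambda>t. f (\<lambda>c. \<xi> c + t * tdir_y \<xi> c)) 0)"

definition Dsig :: "nat \<times> nat \<Rightarrow> jfun \<Rightarrow> jfun" where
  "Dsig \<sigma> f = (Dx ^^ fst \<sigma>) ((Dy ^^ snd \<sigma>) f)"

text \<open>An operator sum_sigma a^sigma D_sigma is given by its coefficient map.\<close>
type_synonym cdop = "nat \<times> nat \<Rightarrow> jfun"

definition opsupp :: "cdop \<Rightarrow> (nat \<times> nat) set" where
  "opsupp h = {\<sigma>. \<exists>\<xi>. h \<sigma> \<xi> \<noteq> 0}"

definition is_cdop :: "cdop \<Rightarrow> bool" where
  "is_cdop h \<longleftrightarrow> finite (opsupp h) \<and> (\<forall>\<sigma>. smooth_fn (h \<sigma>) \<and> indep_p (h \<sigma>))"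

definition apply_op :: "cdop \<Rightarrow> jfun \<Rightarrow> jfun" where
  "apply_op h f = (\<lambda>\<xi>. \<Sum>\<sigma>\<in>opsupp h. h \<sigma> \<xi> * Dsig \<sigma> f \<xi>)"

definition apply_adj :: "cdop \<Rightarrow> jfun \<Rightarrow> jfun" where
  "apply_adj h f = (\<lambda>\<xi>. \<Sum>\<sigma>\<in>opsupp h. (-1) ^ (fst \<sigma> + snd \<sigma>) * Dsig \<sigma> (\<lambda>\<eta>. h \<sigma> \<eta> * f \<eta>) \<xi>)"

definition lin :: "jfun \<Rightarrow> cdop" where
  "lin F = (\<lambda>\<sigma>. pd (CU (fst \<sigma>) (snd \<sigma>)) F)"

text \<open>The function p (so that D_sigma p = p_sigma); H_u = H(p).\<close>
definition pfun :: jfun where "pfun = jp 0 0"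

text \<open>Points of the infinite prolongation of E = {F = 0}.\<close>
definition onE :: "jfun \<Rightarrow> jpt \<Rightarrow> bool" where
  "onE F \<xi> \<longleftrightarrow> (\<forall>\<sigma>. Dsig \<sigma> F \<xi> = 0)"

text \<open>Points of the infinite prolongation of T^*E = {F = 0, ell_F(p) = 0}.\<close>
definition onTE :: "jfun \<Rightarrow> jpt \<Rightarrow> bool" where
  "onTE F \<xi> \<longleftrightarrow> (\<forall>\<sigma>. Dsig \<sigma> F \<xi> = 0 \<and> Dsig \<sigma> (apply_op (lin F) pfun) \<xi> = 0)"

definition var_bivector :: "jfun \<Rightarrow> cdop \<Rightarrow> bool" where
  "var_bivector F H \<longleftrightarrow>
     is_cdop H \<and>
     (\<forall>\<xi>. onTE F \<xi> \<longrightarrow> apply_op (lin F) (apply_op H pfun) \<xi> = 0) \<and>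
     (\<forall>\<phi>. smooth_fn \<phi> \<and> indep_p \<phi> \<longrightarrow>
        (\<forall>\<xi>. onE F \<xi> \<longrightarrow>
           apply_adj H (apply_adj (lin F) \<phi>) \<xi> = apply_op (lin F) (apply_op H \<phi>) \<xi>))"

definition laplace :: jfun where "laplace = (\<lambda>\<xi>. ju 2 0 \<xi> + ju 0 2 \<xi>)"

definition mkop :: "((nat \<times> nat) \<times> jfun) list \<Rightarrow> cdop" where
  "mkop ps = (\<lambda>\<sigma> \<xi>. \<Sum>(\<tau>, a)\<leftarrow>ps. if \<tau> = \<sigma> then a \<xi> else 0)"

text \<open>Multi-index (i,j) stands for D_x^i D_y^j; e.g. (1,1) is p_xy, (0,2) is p_yy.\<close>

definition B0 :: cdop where "B0 = mkop [((0,0), \<lambda>_. 1)]"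
definition B1 :: cdop where "B1 = mkop [((0,2), \<lambda>_. 1)]"
definition B2 :: cdop where "B2 = mkop [((1,1), \<lambda>_. 1)]"
definition B3 :: cdop where
  "B3 = mkop [((0,1), \<lambda>_. 1), ((1,1), \<lambda>\<xi>. 2 * jx \<xi>), ((0,2), \<lambda>\<xi>. 2 * jy \<xi>)]"
definition B4 :: cdop where
  "B4 = mkop [((1,0), \<lambda>_. 1), ((1,1), \<lambda>\<xi>. 2 * jy \<xi>), ((0,2), \<lambda>\<xi>. - 2 * jx \<xi>)]"
definition B5 :: cdop where
  "B5 = mkop [((0,1), \<lambda>\<xi>. ju 0 2 \<xi>), ((1,0), \<lambda>\<xi>. - ju 1 1 \<xi>),
              ((0,2), \<lambda>\<xi>. 2 * ju 0 1 \<xi>), ((1,1), \<lambda>\<xi>. - 2 * ju 1 0 \<xi>)]"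
definition B6 :: cdop where
  "B6 = mkop [((1,0), \<lambda>\<xi>. ju 0 2 \<xi>), ((0,1), \<lambda>\<xi>. ju 1 1 \<xi>),
              ((1,1), \<lambda>\<xi>. 2 * ju 0 1 \<xi>), ((0,2), \<lambda>\<xi>. 2 * ju 1 0 \<xi>)]"
definition B7 :: cdop where
  "B7 = mkop [((1,0), \<lambda>\<xi>. ju 0 1 \<xi> + jx \<xi> * ju 1 1 \<xi> + jy \<xi> * ju 0 2 \<xi>),
              ((0,1), \<lambda>\<xi>. ju 1 0 \<xi> + jy \<xi> * ju 1 1 \<xi> - jx \<xi> * ju 0 2 \<xi>),
              ((0,2), \<lambda>\<xi>. 2 * (jy \<xi> * ju 1 0 \<xi> - jx \<xi> * ju 0 1 \<xi>)),
              ((1,1), \<lambda>\<xi>. 2 * (jx \<xi> * ju 1 0 \<xi> + jy \<xi> * ju 0 1 \<xi>))]"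
definition B8 :: cdop where
  "B8 = mkop [((1,0), \<lambda>\<xi>. - (ju 1 0 \<xi> + jy \<xi> * ju 1 1 \<xi> - jx \<xi> * ju 0 2 \<xi>)),
              ((0,1), \<lambda>\<xi>. ju 0 1 \<xi> + jx \<xi> * ju 1 1 \<xi> + jy \<xi> * ju 0 2 \<xi>),
              ((0,2), \<lambda>\<xi>. 2 * (jx \<xi> * ju 1 0 \<xi> + jy \<xi> * ju 0 1 \<xi>)),
              ((1,1), \<lambda>\<xi>. - 2 * (jy \<xi> * ju 1 0 \<xi> - jx \<xi> * ju 0 1 \<xi>))]"

end

theory Submission
  imports Defs
begin

text \<open>For the Laplace equation the linearization and its adjoint both equal
  \<Delta> = D_x^2 + D_y^2, so the two conditions on a bivector B become the identities
  \<Delta>(B(p)) = 0 on the cotangent equation and B^* \<Delta> = \<Delta> B on E. Both are checked by expanding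
  with the Leibniz rule and D_x D_y = D_y D_x and then eliminating u_(i+2,j) and p_(i+2,j) by
  the equations. The analytic input for this calculus is that smooth functions are closed under
  products, that total derivatives are sums of partial derivatives (a chain rule along lines), and
  Schwarz's theorem, which yields the commutation of D_x and D_y.\<close>

section \<open>Smooth functions on the jet space\<close>

definition depends_only_on :: "coord set \<Rightarrow> jfun \<Rightarrow> bool" where
  "depends_only_on S f \<longleftrightarrow> (\<forall>\<xi> \<eta>. (\<forall>c\<in>S. \<xi> c = \<eta> c) \<longrightarrow> f \<xi> = f \<eta>)"

definition partially_differentiable :: "jfun \<Rightarrow> bool" where
  "partially_differentiable f \<longleftrightarrow> (\<forall>c \<xi>. (\<lambda>t. f (\<xi>(c := t))) differentiable (at (\<xi> c)))"

lemma smooth_fn_iff: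
  "smooth_fn f \<longleftrightarrow> (\<exists>S. finite S \<and> depends_only_on S f) \<and>
     (\<forall>cs. continuous_on UNIV (foldr pd cs f) \<and> partially_differentiable (foldr pd cs f))"
  unfolding smooth_fn_def depends_only_on_def partially_differentiable_def by blast

lemma has_real_derivative_pd:
  assumes "partially_differentiable f"
  shows "((\<lambda>t. f (\<xi>(c := t))) has_real_derivative pd c f (\<xi>(c := t0))) (at t0)"
proof -
  have "(\<lambda>t. f (\<xi>(c := t0, c := t))) differentiable (at ((\<xi>(c := t0)) c))"
    using assms unfolding partially_differentiable_def by blast
  then show ?thesis
    by (simp add: pd_def DERIV_deriv_iff_real_differentiable)
qed

lemma has_real_derivative_pd_at:
  "partially_differentiable f \<Longrightarrow> ((\<lambda>t. f (\<xi>(c := t))) has_real_derivative pd c f \<xi>) (at (\<xi> c))"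
  using has_real_derivative_pd[of f \<xi> c "\<xi> c"] by simp

lemma pd_eqI:
  assumes "\<And>\<xi>. ((\<lambda>t. f (\<xi>(c := t))) has_real_derivative g \<xi>) (at (\<xi> c))"
  shows "pd c f = g"
  using assms unfolding pd_def by (auto intro!: ext DERIV_imp_deriv)

lemma partially_differentiableI:
  assumes "\<And>c \<xi>. ((\<lambda>t. f (\<xi>(c := t))) has_real_derivative g c \<xi>) (at (\<xi> c))"
  shows "partially_differentiable f"
  using assms unfolding partially_differentiable_def real_differentiable_def by blast

lemma smooth_fn_depends_onE:
  assumes "smooth_fn f"
  obtains S where "finite S" "depends_only_on S f"
  using assms unfolding smooth_fn_iff by blast

lemma smooth_fn_derivatives:
  "smooth_fn f \<Longrightarrow> continuous_on UNIV (foldr pd cs f) \<and> partially_differentiable (foldr pd cs f)"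
  unfolding smooth_fn_iff by blast

lemma smooth_fn_continuous_on: "smooth_fn f \<Longrightarrow> continuous_on UNIV f"
  using smooth_fn_derivatives[of f "[]"] by simp

lemma smooth_fn_partially_differentiable: "smooth_fn f \<Longrightarrow> partially_differentiable f"
  using smooth_fn_derivatives[of f "[]"] by simp

lemma depends_only_on_pd:
  assumes f: "depends_only_on S f"
  shows "depends_only_on S (pd c f)"
  unfolding depends_only_on_def
proof (intro allI impI)
  fix \<xi> \<eta> :: jpt
  assume agree: "\<forall>c\<in>S. \<xi> c = \<eta> c"
  show "pd c f \<xi> = pd c f \<eta>"
  proof (cases "c \<in> S")
    case True
    then have "(\<lambda>t. f (\<xi>(c := t))) = (\<lambda>t. f (\<eta>(c := t)))"
      using f agree unfolding depends_only_on_def by (intro ext) (metis fun_upd_apply)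
    with True agree show ?thesis by (simp add: pd_def)
  next
    case False
    then have "(\<lambda>t. f (\<xi>(c := t))) = (\<lambda>t. f \<xi>)" "(\<lambda>t. f (\<eta>(c := t))) = (\<lambda>t. f \<eta>)"
      using f unfolding depends_only_on_def by (auto intro!: ext)
    then show ?thesis by (simp add: pd_def)
  qed
qed

lemma smooth_fn_pd:
  assumes "smooth_fn f"
  shows "smooth_fn (pd c f)"
  unfolding smooth_fn_iff
proof (intro conjI allI)
  show "\<exists>S. finite S \<and> depends_only_on S (pd c f)"
    using assms depends_only_on_pd by (meson smooth_fn_depends_onE)
  fix cs
  show "continuous_on UNIV (foldr pd cs (pd c f))" "partially_differentiable (foldr pd cs (pd c f))"
    using smooth_fn_derivatives[OF assms, of "cs @ [c]"] by simp_all
qed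

lemma has_real_derivative_pd_add:
  "partially_differentiable f \<Longrightarrow> partially_differentiable g \<Longrightarrow>
    ((\<lambda>t. f (\<xi>(c := t)) + g (\<xi>(c := t))) has_real_derivative pd c f \<xi> + pd c g \<xi>) (at (\<xi> c))"
  by (intro DERIV_add has_real_derivative_pd_at)

lemma has_real_derivative_pd_mult:
  "partially_differentiable f \<Longrightarrow> partially_differentiable g \<Longrightarrow>
    ((\<lambda>t. f (\<xi>(c := t)) * g (\<xi>(c := t))) has_real_derivative
      pd c f \<xi> * g \<xi> + f \<xi> * pd c g \<xi>) (at (\<xi> c))"
  by (rule DERIV_cong[OF DERIV_mult[OF has_real_derivative_pd_at has_real_derivative_pd_at]]) simp_all

lemma partially_differentiable_add:
  "partially_differentiable f \<Longrightarrow> partially_differentiable g \<Longrightarrow>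
    partially_differentiable (\<lambda>\<xi>. f \<xi> + g \<xi>)"
  by (rule partially_differentiableI, rule has_real_derivative_pd_add)

lemma partially_differentiable_mult:
  "partially_differentiable f \<Longrightarrow> partially_differentiable g \<Longrightarrow>
    partially_differentiable (\<lambda>\<xi>. f \<xi> * g \<xi>)"
  by (rule partially_differentiableI, rule has_real_derivative_pd_mult)

text \<open>To see that products of smooth functions are smooth, enlarge them to the finite sums of
  products of smooth functions: this class is closed under partial differentiation.\<close>

inductive_set sums_of_products :: "jfun set" where
  product: "smooth_fn f \<Longrightarrow> smooth_fn g \<Longrightarrow> (\<lambda>\<xi>. f \<xi> * g \<xi>) \<in> sums_of_products"
| sum: "f \<in> sums_of_products \<Longrightarrow> g \<in> sums_of_products \<Longrightarrow> (\<lambda>\<xi>. f \<xi> + g \<xi>) \<in> sums_of_products"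

lemma depends_only_on_combine:
  "depends_only_on S f \<Longrightarrow> depends_only_on T g \<Longrightarrow>
    depends_only_on (S \<union> T) (\<lambda>\<xi>. h (f \<xi>) (g \<xi>))"
  unfolding depends_only_on_def by (metis UnI1 UnI2)

lemma sums_of_products_regular:
  assumes "f \<in> sums_of_products"
  shows "continuous_on UNIV f \<and> partially_differentiable f \<and> (\<exists>S. finite S \<and> depends_only_on S f)"
  using assms
proof (induction rule: sums_of_products.induct)
  case (product f g)
  obtain S T where "finite S" "depends_only_on S f" "finite T" "depends_only_on T g"
    using product by (meson smooth_fn_depends_onE)
  with product show ?case
    by (intro conjI exI[of _ "S \<union> T"] continuous_on_mult partially_differentiable_mult
        depends_only_on_combine smooth_fn_continuous_on smooth_fn_partially_differentiable) simp_all
next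
  case (sum f g)
  then obtain S T where "finite S" "depends_only_on S f" "finite T" "depends_only_on T g"
    by blast
  with sum show ?case
    by (intro conjI exI[of _ "S \<union> T"] continuous_on_add partially_differentiable_add
        depends_only_on_combine) simp_all
qed

lemma pd_add:
  "partially_differentiable f \<Longrightarrow> partially_differentiable g \<Longrightarrow>
    pd c (\<lambda>\<xi>. f \<xi> + g \<xi>) = (\<lambda>\<xi>. pd c f \<xi> + pd c g \<xi>)"
  by (intro pd_eqI has_real_derivative_pd_add)

lemma pd_mult:
  "partially_differentiable f \<Longrightarrow> partially_differentiable g \<Longrightarrow>
    pd c (\<lambda>\<xi>. f \<xi> * g \<xi>) = (\<lambda>\<xi>. pd c f \<xi> * g \<xi> + f \<xi> * pd c g \<xi>)"
  by (intro pd_eqI has_real_derivative_pd_mult)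

lemma sums_of_products_pd: "f \<in> sums_of_products \<Longrightarrow> pd c f \<in> sums_of_products"
proof (induction rule: sums_of_products.induct)
  case (product f g)
  then show ?case
    by (simp add: pd_mult smooth_fn_partially_differentiable smooth_fn_pd sums_of_products.intros)
next
  case (sum f g)
  then show ?case
    using sums_of_products_regular by (simp add: pd_add sums_of_products.sum)
qed

lemma smooth_fn_sums_of_products:
  assumes f: "f \<in> sums_of_products"
  shows "smooth_fn f"
proof -
  have "foldr pd cs f \<in> sums_of_products" for cs
    using f by (induction cs) (simp_all add: sums_of_products_pd)
  then show ?thesis
    unfolding smooth_fn_iff using sums_of_products_regular f by blast
qed

lemma pd_const: "pd c (\<lambda>\<xi>. k) = (\<lambda>\<xi>. 0)"
  by (rule pd_eqI) simp

lemma pd_coord: "pd c (\<lambda>\<xi>. \<xi> d) = (\<lambda>\<xi>. if c = d then 1 else 0)"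
  by (rule pd_eqI) (auto simp: fun_upd_apply)

lemma smooth_fn_const: "smooth_fn (\<lambda>\<xi>. k)"
proof -
  have "foldr pd cs (\<lambda>\<xi>. k) = (\<lambda>\<xi>. if cs = [] then k else 0)" for cs
    by (induction cs) (auto simp: pd_const)
  moreover have "partially_differentiable (\<lambda>\<xi>. k')" for k' :: real
    by (rule partially_differentiableI[where g = "\<lambda>_ _. 0"]) simp
  ultimately show ?thesis
    unfolding smooth_fn_iff depends_only_on_def by auto
qed

lemma smooth_fn_coord: "smooth_fn (\<lambda>\<xi>. \<xi> d)"
proof -
  have derivatives: "foldr pd cs (\<lambda>\<xi>. \<xi> d) \<in> insert (\<lambda>\<xi>. \<xi> d) (range (\<lambda>k \<xi>. k))" for cs
    by (induction cs) (auto simp: pd_coord pd_const)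
  have "partially_differentiable (\<lambda>\<xi>. \<xi> d)"
    by (rule partially_differentiableI[where g = "\<lambda>c \<xi>. if c = d then 1 else 0"]) auto
  moreover have "continuous_on UNIV (\<lambda>\<xi>. \<xi> d)"
    by simp
  ultimately have "continuous_on UNIV g \<and> partially_differentiable g"
    if "g \<in> insert (\<lambda>\<xi>. \<xi> d) (range (\<lambda>k \<xi>. k))" for g
    using that smooth_fn_const smooth_fn_continuous_on smooth_fn_partially_differentiable by auto
  moreover have "depends_only_on {d} (\<lambda>\<xi>. \<xi> d)"
    unfolding depends_only_on_def by simp
  ultimately show ?thesis
    unfolding smooth_fn_iff using derivatives by blast
qed

lemma smooth_fn_mult: "smooth_fn f \<Longrightarrow> smooth_fn g \<Longrightarrow> smooth_fn (\<lambda>\<xi>. f \<xi> * g \<xi>)"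
  by (rule smooth_fn_sums_of_products, rule sums_of_products.product)

lemma smooth_fn_add:
  assumes "smooth_fn f" "smooth_fn g"
  shows "smooth_fn (\<lambda>\<xi>. f \<xi> + g \<xi>)"
proof -
  have "(\<lambda>\<xi>. f \<xi> * 1 + g \<xi> * 1) \<in> sums_of_products"
    using assms smooth_fn_const by (intro sums_of_products.intros)
  then show ?thesis
    using smooth_fn_sums_of_products by simp
qed

lemma smooth_fn_minus: "smooth_fn f \<Longrightarrow> smooth_fn (\<lambda>\<xi>. - f \<xi>)"
  using smooth_fn_mult[OF smooth_fn_const, of f "-1"] by simp

lemma smooth_fn_diff: "smooth_fn f \<Longrightarrow> smooth_fn g \<Longrightarrow> smooth_fn (\<lambda>\<xi>. f \<xi> - g \<xi>)"
  using smooth_fn_add[OF _ smooth_fn_minus, of f g] by simp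

lemma smooth_fn_sum:
  "finite I \<Longrightarrow> (\<And>i. i \<in> I \<Longrightarrow> smooth_fn (f i)) \<Longrightarrow> smooth_fn (\<lambda>\<xi>. \<Sum>i\<in>I. f i \<xi>)"
  by (induction I rule: finite_induct) (auto intro!: smooth_fn_add smooth_fn_const)

section \<open>The chain rule along lines and Schwarz's theorem\<close>

definition line :: "jpt \<Rightarrow> jpt \<Rightarrow> real \<Rightarrow> jpt" where
  "line \<xi> v t = (\<lambda>c. \<xi> c + t * v c)"

lemma line_0 [simp]: "line \<xi> v 0 = \<xi>"
  by (simp add: line_def)

lemma continuous_on_line_fun_upd:
  "continuous_on UNIV (\<lambda>(s, t). (line \<xi> w s)(a := \<xi> a + t * r))"
proof (intro continuous_on_coordinatewise_then_product)
  fix i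
  show "continuous_on UNIV (\<lambda>p. ((\<lambda>(s, t). (line \<xi> w s)(a := \<xi> a + t * r)) p) i)"
    by (cases "i = a") (auto simp: line_def case_prod_beta intro!: continuous_intros)
qed

text \<open>Differentiate f (P s t) jointly in (s, t) with has_derivative_partialsI, which needs
  the partial derivative in t to be continuous, and restrict to the diagonal s = t.\<close>

lemma has_real_derivative_line_fun_upd:
  assumes diff: "partially_differentiable f" and cont: "continuous_on UNIV (pd a f)"
    and "w a = 0" and base: "((\<lambda>s. f (line \<xi> w s)) has_real_derivative D) (at 0)"
  shows "((\<lambda>t. f ((line \<xi> w t)(a := \<xi> a + t * r))) has_real_derivative D + r * pd a f \<xi>) (at 0)"
proof -
  define P where "P s t = (line \<xi> w s)(a := \<xi> a + t * r)" for s t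
  define G where "G s t = f (P s t)" for s t
  have "P s 0 = line \<xi> w s" for s
    using \<open>w a = 0\<close> by (auto simp: P_def line_def)
  then have partial_s: "((\<lambda>s. G s 0) has_derivative (*) D) (at 0)"
    using base by (simp add: G_def has_field_derivative_def)
  have partial_t: "((\<lambda>t. G s t) has_derivative blinfun_apply (blinfun_mult_right (r * pd a f (P s t))))
      (at t)" for s t
  proof -
    have "((\<lambda>\<tau>. f ((line \<xi> w s)(a := \<tau>))) has_real_derivative pd a f (P s t)) (at (\<xi> a + t * r))"
      using has_real_derivative_pd[OF diff] by (simp add: P_def)
    moreover have "((\<lambda>t. \<xi> a + t * r) has_real_derivative r) (at t)"
      by (auto intro!: derivative_eq_intros)
    ultimately have "((\<lambda>t. G s t) has_real_derivative pd a f (P s t) * r) (at t)"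
      unfolding G_def P_def by (rule DERIV_chain2)
    then show ?thesis
      by (simp add: has_field_derivative_def mult.commute)
  qed
  have "continuous_on UNIV (\<lambda>p. blinfun_mult_right (r * pd a f ((\<lambda>(s, t). P s t) p)))"
    unfolding P_def
    by (intro continuous_intros continuous_on_compose2[OF cont continuous_on_line_fun_upd]) simp
  then have partial_t_continuous: "continuous (at (0, 0) within UNIV \<times> UNIV)
      (\<lambda>(s, t). blinfun_mult_right (r * pd a f (P s t)))"
    by (simp add: continuous_on_eq_continuous_at split_beta')
  have "((\<lambda>(s, t). G s t) has_derivative
      (\<lambda>(ds, dt). D * ds + blinfun_mult_right (r * pd a f (P 0 0)) dt)) (at (0, 0) within UNIV \<times> UNIV)"
    by (rule has_derivative_partialsI[OF partial_s[THEN has_derivative_at_withinI]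
          partial_t[THEN has_derivative_at_withinI] partial_t_continuous]) auto
  then have "((\<lambda>(s, t). G s t) has_derivative (\<lambda>(ds, dt). D * ds + r * pd a f \<xi> * dt)) (at (0, 0))"
    by (simp add: P_def line_def)
  moreover have "((\<lambda>t. (t, t)) has_derivative (\<lambda>h. (h, h))) (at 0)"
    by (auto intro!: derivative_eq_intros)
  ultimately have "((\<lambda>t. G t t) has_derivative (\<lambda>h. D * h + r * pd a f \<xi> * h)) (at 0)"
    using has_derivative_compose[of "\<lambda>t. (t, t)"] by fastforce
  then show ?thesis
    unfolding has_field_derivative_def G_def P_def
    by (rule has_derivative_eq_rhs) (simp add: fun_eq_iff algebra_simps)
qed

lemma has_real_derivative_line_finite_support:
  assumes diff: "partially_differentiable f" and cont: "\<And>c. continuous_on UNIV (pd c f)"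
    and "finite T" and supp: "\<And>c. c \<notin> T \<Longrightarrow> v c = 0"
  shows "((\<lambda>t. f (line \<xi> v t)) has_real_derivative (\<Sum>c\<in>T. v c * pd c f \<xi>)) (at 0)"
  using \<open>finite T\<close> supp
proof (induction T arbitrary: v rule: finite_induct)
  case empty
  then have "line \<xi> v t = \<xi>" for t by (auto simp: line_def)
  then show ?case by simp
next
  case (insert a T)
  define w where "w = v(a := 0)"
  have line_eq: "line \<xi> v = (\<lambda>t. (line \<xi> w t)(a := \<xi> a + t * v a))"
    by (auto simp: line_def w_def fun_eq_iff)
  have sum_eq: "(\<Sum>c\<in>insert a T. v c * pd c f \<xi>) = (\<Sum>c\<in>T. w c * pd c f \<xi>) + v a * pd a f \<xi>"
    using insert by (auto simp: w_def intro!: sum.cong)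
  have along_w: "((\<lambda>s. f (line \<xi> w s)) has_real_derivative (\<Sum>c\<in>T. w c * pd c f \<xi>)) (at 0)"
    using insert by (intro insert.IH) (auto simp: w_def)
  show ?case
    unfolding line_eq sum_eq by (rule has_real_derivative_line_fun_upd[OF diff cont _ along_w]) (simp add: w_def)
qed

lemma has_real_derivative_line:
  assumes "smooth_fn f" "finite S" "depends_only_on S f"
  shows "((\<lambda>t. f (line \<xi> v t)) has_real_derivative (\<Sum>c\<in>S. v c * pd c f \<xi>)) (at 0)"
proof -
  define w where "w c = (if c \<in> S then v c else 0)" for c
  have "f (line \<xi> v t) = f (line \<xi> w t)" for t
    using assms(3) unfolding depends_only_on_def line_def w_def by auto
  moreover have "(\<Sum>c\<in>S. v c * pd c f \<xi>) = (\<Sum>c\<in>S. w c * pd c f \<xi>)"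
    by (simp add: w_def)
  moreover have "continuous_on UNIV (pd c f)" for c
    using smooth_fn_derivatives[OF assms(1), of "[c]"] by simp
  ultimately show ?thesis
    using has_real_derivative_line_finite_support[OF smooth_fn_partially_differentiable[OF assms(1)]
        _ assms(2), of w \<xi>] by (simp add: w_def)
qed

lemma mixed_difference_mvt:
  assumes diff: "partially_differentiable f" "partially_differentiable (pd c f)"
    and "c \<noteq> d" "0 < h"
  obtains s t where "\<xi> c < s" "s < \<xi> c + h" "\<xi> d < t" "t < \<xi> d + h"
    "f (\<xi>(c := \<xi> c + h, d := \<xi> d + h)) - f (\<xi>(c := \<xi> c + h)) - f (\<xi>(d := \<xi> d + h)) + f \<xi>
       = h * h * pd d (pd c f) (\<xi>(c := s, d := t))"
proof -
  define \<phi> where "\<phi> s = f (\<xi>(c := s, d := \<xi> d + h)) - f (\<xi>(c := s))" for s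
  define \<phi>' where "\<phi>' s = pd c f (\<xi>(c := s, d := \<xi> d + h)) - pd c f (\<xi>(c := s))" for s
  have "DERIV \<phi> s :> \<phi>' s" for s
    using has_real_derivative_pd[OF diff(1), of "\<xi>(d := \<xi> d + h)" c s]
      has_real_derivative_pd[OF diff(1), of \<xi> c s] \<open>c \<noteq> d\<close>
    unfolding \<phi>_def \<phi>'_def by (intro DERIV_diff) (simp_all add: fun_upd_twist)
  then obtain s where s: "\<xi> c < s" "s < \<xi> c + h" "\<phi> (\<xi> c + h) - \<phi> (\<xi> c) = h * \<phi>' s"
    using MVT2[of "\<xi> c" "\<xi> c + h" \<phi> \<phi>'] \<open>0 < h\<close> by auto
  define \<psi> where "\<psi> t = pd c f (\<xi>(c := s, d := t))" for t
  define \<psi>' where "\<psi>' t = pd d (pd c f) (\<xi>(c := s, d := t))" for t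
  have "DERIV \<psi> t :> \<psi>' t" for t
    unfolding \<psi>_def \<psi>'_def using has_real_derivative_pd[OF diff(2), of "\<xi>(c := s)" d t] by simp
  then obtain t where t: "\<xi> d < t" "t < \<xi> d + h" "\<psi> (\<xi> d + h) - \<psi> (\<xi> d) = h * \<psi>' t"
    using MVT2[of "\<xi> d" "\<xi> d + h" \<psi> \<psi>'] \<open>0 < h\<close> by auto
  have "\<xi>(c := s, d := \<xi> d) = \<xi>(c := s)"
    using \<open>c \<noteq> d\<close> by (auto simp: fun_eq_iff)
  with s t show thesis
    by (intro that[of s t]) (auto simp: \<phi>_def \<phi>'_def \<psi>_def \<psi>'_def algebra_simps)
qed

lemma isCont_fun_upd2:
  assumes "continuous_on UNIV g"
  shows "isCont (\<lambda>(a :: real, b :: real). g (\<xi>(c := a, d := b))) p"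
proof -
  have "continuous_on UNIV (\<lambda>(a :: real, b :: real). \<xi>(c := a, d := b))"
  proof (intro continuous_on_coordinatewise_then_product)
    fix i
    show "continuous_on UNIV (\<lambda>p. ((\<lambda>(a, b). \<xi>(c := a, d := b)) p) i)"
      by (cases "i = d"; cases "i = c") (auto simp: case_prod_beta intro!: continuous_intros)
  qed
  then have "continuous_on UNIV (\<lambda>p. g ((\<lambda>(a, b). \<xi>(c := a, d := b)) p))"
    by (rule continuous_on_compose2[OF assms]) simp
  then show ?thesis
    by (cases p) (simp add: continuous_on_eq_continuous_at split_beta')
qed

lemma mixed_difference_quotient_tendsto:
  assumes f: "smooth_fn f" and "c \<noteq> d"
  shows "((\<lambda>h. (f (\<xi>(c := \<xi> c + h, d := \<xi> d + h)) - f (\<xi>(c := \<xi> c + h))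
      - f (\<xi>(d := \<xi> d + h)) + f \<xi>) / (h * h)) \<longlongrightarrow> pd d (pd c f) \<xi>) (at_right 0)"
    (is "(?q \<longlongrightarrow> _) _")
proof -
  have "\<exists>s t. \<xi> c < s \<and> s < \<xi> c + h \<and> \<xi> d < t \<and> t < \<xi> d + h \<and>
      ?q h = pd d (pd c f) (\<xi>(c := s, d := t))" if pos: "0 < h" for h
  proof -
    obtain s t where "\<xi> c < s" "s < \<xi> c + h" "\<xi> d < t" "t < \<xi> d + h"
      "f (\<xi>(c := \<xi> c + h, d := \<xi> d + h)) - f (\<xi>(c := \<xi> c + h)) - f (\<xi>(d := \<xi> d + h)) + f \<xi>
         = h * h * pd d (pd c f) (\<xi>(c := s, d := t))"
      using mixed_difference_mvt[OF smooth_fn_partially_differentiable[OF f]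
          smooth_fn_partially_differentiable[OF smooth_fn_pd[OF f]] \<open>c \<noteq> d\<close> pos] .
    with pos show ?thesis
      by auto
  qed
  then obtain s t where st: "\<And>h. 0 < h \<Longrightarrow> \<xi> c < s h \<and> s h < \<xi> c + h \<and> \<xi> d < t h \<and>
      t h < \<xi> d + h \<and> ?q h = pd d (pd c f) (\<xi>(c := s h, d := t h))"
    by metis
  have near: "((\<lambda>h. a + h) \<longlongrightarrow> a) (at_right 0)" for a :: real
    by (auto intro!: tendsto_eq_intros)
  have "(s \<longlongrightarrow> \<xi> c) (at_right 0)" "(t \<longlongrightarrow> \<xi> d) (at_right 0)"
    using st eventually_at_right_less[of 0]
    by (auto intro!: tendsto_sandwich[OF _ _ tendsto_const near] elim: eventually_mono
        simp: less_imp_le)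
  then have "((\<lambda>h. (s h, t h)) \<longlongrightarrow> (\<xi> c, \<xi> d)) (at_right 0)"
    by (rule tendsto_Pair)
  moreover have "isCont (\<lambda>(a, b). pd d (pd c f) (\<xi>(c := a, d := b))) (\<xi> c, \<xi> d)"
    using smooth_fn_continuous_on[OF smooth_fn_pd[OF smooth_fn_pd[OF f]]] by (rule isCont_fun_upd2)
  ultimately have "((\<lambda>h. pd d (pd c f) (\<xi>(c := s h, d := t h))) \<longlongrightarrow> pd d (pd c f) \<xi>) (at_right 0)"
    using isCont_tendsto_compose by fastforce
  moreover have "\<forall>\<^sub>F h in at_right 0. pd d (pd c f) (\<xi>(c := s h, d := t h)) = ?q h"
    using eventually_at_right_less[of 0] by eventually_elim (simp add: st)
  ultimately show ?thesis
    by (rule Lim_transform_eventually)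
qed

text \<open>Schwarz's theorem: both mixed partials are limits of the same symmetric difference quotient.\<close>

lemma pd_commute:
  assumes "smooth_fn f"
  shows "pd c (pd d f) = pd d (pd c f)"
proof (cases "c = d")
  case False
  show ?thesis
  proof
    fix \<xi> :: jpt
    have "f (\<xi>(d := \<xi> d + h, c := \<xi> c + h)) = f (\<xi>(c := \<xi> c + h, d := \<xi> d + h)) " for h
      using False by (simp add: fun_upd_twist)
    then have "((\<lambda>h. (f (\<xi>(c := \<xi> c + h, d := \<xi> d + h)) - f (\<xi>(c := \<xi> c + h))
        - f (\<xi>(d := \<xi> d + h)) + f \<xi>) / (h * h)) \<longlongrightarrow> pd c (pd d f) \<xi>) (at_right 0)"
      using mixed_difference_quotient_tendsto[OF assms not_sym[OF False], of \<xi>]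
      by (simp add: algebra_simps)
    with mixed_difference_quotient_tendsto[OF assms False, of \<xi>]
    show "pd c (pd d f) \<xi> = pd d (pd c f) \<xi>"
      by (intro tendsto_unique[OF trivial_limit_at_right_real])
  qed
qed simp

section \<open>Total derivatives\<close>

definition total_deriv :: "(jpt \<Rightarrow> jpt) \<Rightarrow> jfun \<Rightarrow> jfun" where
  "total_deriv v f = (\<lambda>\<xi>. deriv (\<lambda>t. f (line \<xi> (v \<xi>) t)) 0)"

lemma Dx_eq_total_deriv: "Dx = total_deriv tdir_x"
  by (simp add: fun_eq_iff Dx_def total_deriv_def line_def)

lemma Dy_eq_total_deriv: "Dy = total_deriv tdir_y"
  by (simp add: fun_eq_iff Dy_def total_deriv_def line_def)

lemma total_deriv_eqI:
  "(\<And>\<xi>. ((\<lambda>t. f (line \<xi> (v \<xi>) t)) has_real_derivative g \<xi>) (at 0)) \<Longrightarrow> total_deriv v f = g"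
  by (simp add: fun_eq_iff total_deriv_def DERIV_imp_deriv)

lemma total_deriv_expansion:
  "smooth_fn f \<Longrightarrow> finite S \<Longrightarrow> depends_only_on S f \<Longrightarrow>
    total_deriv v f = (\<lambda>\<xi>. \<Sum>c\<in>S. v \<xi> c * pd c f \<xi>)"
  by (intro total_deriv_eqI has_real_derivative_line)

lemma has_real_derivative_total_deriv:
  assumes "smooth_fn f"
  shows "((\<lambda>t. f (line \<xi> (v \<xi>) t)) has_real_derivative total_deriv v f \<xi>) (at 0)"
proof -
  obtain S where "finite S" "depends_only_on S f"
    using assms by (rule smooth_fn_depends_onE)
  with assms show ?thesis
    by (simp add: total_deriv_expansion has_real_derivative_line)
qed

lemma total_deriv_add:
  "smooth_fn f \<Longrightarrow> smooth_fn g \<Longrightarrow>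
    total_deriv v (\<lambda>\<xi>. f \<xi> + g \<xi>) = (\<lambda>\<xi>. total_deriv v f \<xi> + total_deriv v g \<xi>)"
  by (intro total_deriv_eqI DERIV_add has_real_derivative_total_deriv)

lemma total_deriv_diff:
  "smooth_fn f \<Longrightarrow> smooth_fn g \<Longrightarrow>
    total_deriv v (\<lambda>\<xi>. f \<xi> - g \<xi>) = (\<lambda>\<xi>. total_deriv v f \<xi> - total_deriv v g \<xi>)"
  by (intro total_deriv_eqI DERIV_diff has_real_derivative_total_deriv)

lemma total_deriv_minus:
  "smooth_fn f \<Longrightarrow> total_deriv v (\<lambda>\<xi>. - f \<xi>) = (\<lambda>\<xi>. - total_deriv v f \<xi>)"
  by (intro total_deriv_eqI DERIV_minus has_real_derivative_total_deriv)

lemma total_deriv_mult: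
  "smooth_fn f \<Longrightarrow> smooth_fn g \<Longrightarrow>
    total_deriv v (\<lambda>\<xi>. f \<xi> * g \<xi>) = (\<lambda>\<xi>. total_deriv v f \<xi> * g \<xi> + f \<xi> * total_deriv v g \<xi>)"
  by (rule total_deriv_eqI, rule DERIV_cong[OF DERIV_mult[OF has_real_derivative_total_deriv
        has_real_derivative_total_deriv]]) simp_all

lemma total_deriv_const: "total_deriv v (\<lambda>\<xi>. k) = (\<lambda>\<xi>. 0)"
  by (rule total_deriv_eqI) simp

lemma total_deriv_coord: "total_deriv v (\<lambda>\<xi>. \<xi> c) = (\<lambda>\<xi>. v \<xi> c)"
  by (rule total_deriv_eqI) (auto simp: line_def intro!: derivative_eq_intros)

lemma total_deriv_sum:
  "finite I \<Longrightarrow> (\<And>i. i \<in> I \<Longrightarrow> smooth_fn (f i)) \<Longrightarrow>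
    total_deriv v (\<lambda>\<xi>. \<Sum>i\<in>I. f i \<xi>) = (\<lambda>\<xi>. \<Sum>i\<in>I. total_deriv v (f i) \<xi>)"
  by (induction I rule: finite_induct) (simp_all add: total_deriv_const total_deriv_add smooth_fn_sum)

lemma smooth_fn_total_deriv:
  assumes "smooth_fn f" "\<And>c. smooth_fn (\<lambda>\<xi>. v \<xi> c)"
  shows "smooth_fn (total_deriv v f)"
proof -
  obtain S where "finite S" "depends_only_on S f"
    using assms(1) by (rule smooth_fn_depends_onE)
  with assms show ?thesis
    by (simp add: total_deriv_expansion smooth_fn_sum smooth_fn_mult smooth_fn_pd)
qed

text \<open>In the expansion of both sides the second partial derivatives cancel by Schwarz's
  theorem.\<close>

lemma total_deriv_commute:
  assumes f: "smooth_fn f"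
    and v: "\<And>c. smooth_fn (\<lambda>\<xi>. v \<xi> c)" and w: "\<And>c. smooth_fn (\<lambda>\<xi>. w \<xi> c)"
    and vw: "\<And>c. total_deriv v (\<lambda>\<xi>. w \<xi> c) = total_deriv w (\<lambda>\<xi>. v \<xi> c)"
  shows "total_deriv v (total_deriv w f) = total_deriv w (total_deriv v f)"
proof -
  obtain S where S: "finite S" "depends_only_on S f"
    using f by (rule smooth_fn_depends_onE)
  have pd: "smooth_fn (pd c f)" "depends_only_on S (pd c f)" for c
    using f S by (simp_all add: smooth_fn_pd depends_only_on_pd)
  have expand: "total_deriv u (total_deriv u' f) = (\<lambda>\<xi>. (\<Sum>c\<in>S. total_deriv u (\<lambda>\<xi>. u' \<xi> c) \<xi> * pd c f \<xi>)
      + (\<Sum>c\<in>S. \<Sum>d\<in>S. u \<xi> d * u' \<xi> c * pd d (pd c f) \<xi>))"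
    if "\<And>c. smooth_fn (\<lambda>\<xi>. u' \<xi> c)" for u u'
    using S pd that
    by (simp add: total_deriv_expansion[OF f S] total_deriv_sum total_deriv_mult
        total_deriv_expansion[OF pd(1) S(1) pd(2)] smooth_fn_mult sum_distrib_left mult_ac
        sum.distrib)
  have "(\<Sum>c\<in>S. \<Sum>d\<in>S. v \<xi> d * w \<xi> c * pd d (pd c f) \<xi>) =
      (\<Sum>c\<in>S. \<Sum>d\<in>S. w \<xi> d * v \<xi> c * pd d (pd c f) \<xi>)" for \<xi>
    by (subst sum.swap) (simp add: pd_commute[OF f] mult_ac)
  then show ?thesis
    using v w by (simp add: expand vw)
qed

lemma smooth_fn_tdir_x: "smooth_fn (\<lambda>\<xi>. tdir_x \<xi> c)"
  by (cases c) (simp_all add: tdir_x_def smooth_fn_const smooth_fn_coord)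

lemma smooth_fn_tdir_y: "smooth_fn (\<lambda>\<xi>. tdir_y \<xi> c)"
  by (cases c) (simp_all add: tdir_y_def smooth_fn_const smooth_fn_coord)

lemma Dx_Dy_commute:
  assumes "smooth_fn f"
  shows "Dy (Dx f) = Dx (Dy f)"
proof -
  have "total_deriv tdir_y (\<lambda>\<xi>. tdir_x \<xi> c) = total_deriv tdir_x (\<lambda>\<xi>. tdir_y \<xi> c)" for c
    by (cases c) (simp_all add: tdir_x_def tdir_y_def total_deriv_const total_deriv_coord)
  with assms show ?thesis
    unfolding Dx_eq_total_deriv Dy_eq_total_deriv
    by (intro total_deriv_commute smooth_fn_tdir_x smooth_fn_tdir_y)
qed

lemma jet_coords_eq:
  "jx = (\<lambda>\<xi>. \<xi> CX)" "jy = (\<lambda>\<xi>. \<xi> CY)" "ju i j = (\<lambda>\<xi>. \<xi> (CU i j))" "jp i j = (\<lambda>\<xi>. \<xi> (CP i j))"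
  by (simp_all add: fun_eq_iff jx_def jy_def ju_def jp_def)

lemma smooth_fn_jet_coords:
  "smooth_fn jx" "smooth_fn jy" "smooth_fn (ju i j)" "smooth_fn (jp i j)"
  unfolding jet_coords_eq by (rule smooth_fn_coord)+

lemma Dx_jet_coords:
  "Dx jx = (\<lambda>\<xi>. 1)" "Dx jy = (\<lambda>\<xi>. 0)" "Dx (ju i j) = ju (Suc i) j" "Dx (jp i j) = jp (Suc i) j"
  unfolding jet_coords_eq Dx_eq_total_deriv total_deriv_coord by (simp_all add: tdir_x_def)

lemma Dy_jet_coords:
  "Dy jx = (\<lambda>\<xi>. 0)" "Dy jy = (\<lambda>\<xi>. 1)" "Dy (ju i j) = ju i (Suc j)" "Dy (jp i j) = jp i (Suc j)"
  unfolding jet_coords_eq Dy_eq_total_deriv total_deriv_coord by (simp_all add: tdir_y_def)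

lemma smooth_fn_Dx: "smooth_fn f \<Longrightarrow> smooth_fn (Dx f)"
  unfolding Dx_eq_total_deriv by (rule smooth_fn_total_deriv[OF _ smooth_fn_tdir_x])

lemma smooth_fn_Dy: "smooth_fn f \<Longrightarrow> smooth_fn (Dy f)"
  unfolding Dy_eq_total_deriv by (rule smooth_fn_total_deriv[OF _ smooth_fn_tdir_y])

lemmas Dx_rules [folded Dx_eq_total_deriv] =
  total_deriv_add[where v = tdir_x] total_deriv_diff[where v = tdir_x]
  total_deriv_minus[where v = tdir_x] total_deriv_mult[where v = tdir_x]
  total_deriv_const[where v = tdir_x]

lemmas Dy_rules [folded Dy_eq_total_deriv] =
  total_deriv_add[where v = tdir_y] total_deriv_diff[where v = tdir_y]
  total_deriv_minus[where v = tdir_y] total_deriv_mult[where v = tdir_y]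
  total_deriv_const[where v = tdir_y]

section \<open>C-differential operators given by coefficient lists\<close>

lemma funpow_preserves: "(\<And>f. P f \<Longrightarrow> P (D f)) \<Longrightarrow> P f \<Longrightarrow> P ((D ^^ n) f)"
  by (induction n) simp_all

lemma funpow_additive:
  assumes "\<And>f g. P f \<Longrightarrow> P g \<Longrightarrow> D (\<lambda>\<xi>. f \<xi> + g \<xi>) = (\<lambda>\<xi>. D f \<xi> + D g \<xi>)"
    and "\<And>f. P f \<Longrightarrow> P (D f)" and "P f" "P g"
  shows "(D ^^ n) (\<lambda>\<xi>. f \<xi> + g \<xi>) = (\<lambda>\<xi>. (D ^^ n) f \<xi> + (D ^^ n) g \<xi>)"
  using assms by (induction n) (simp_all add: funpow_preserves)

lemma smooth_fn_Dsig: "smooth_fn f \<Longrightarrow> smooth_fn (Dsig \<sigma> f)"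
  unfolding Dsig_def
  by (intro funpow_preserves[where P = smooth_fn, OF smooth_fn_Dx]
      funpow_preserves[where P = smooth_fn, OF smooth_fn_Dy])

lemma Dsig_add:
  "smooth_fn f \<Longrightarrow> smooth_fn g \<Longrightarrow> Dsig \<sigma> (\<lambda>\<xi>. f \<xi> + g \<xi>) = (\<lambda>\<xi>. Dsig \<sigma> f \<xi> + Dsig \<sigma> g \<xi>)"
  unfolding Dsig_def
  by (simp add: funpow_additive[where P = smooth_fn] funpow_preserves[where P = smooth_fn, OF smooth_fn_Dy]
      Dx_rules Dy_rules smooth_fn_Dx smooth_fn_Dy)

lemma Dsig_const_0: "Dsig \<sigma> (\<lambda>\<xi>. 0) = (\<lambda>\<xi>. 0)"
  unfolding Dsig_def by (simp add: funpow_preserves[where P = "\<lambda>f. f = (\<lambda>\<xi>. 0)"] Dx_rules Dy_rules)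

lemma Dsig_jet_coords:
  "Dsig (i, j) (ju a b) = ju (a + i) (b + j)" "Dsig (i, j) (jp a b) = jp (a + i) (b + j)"
proof -
  have "(Dx ^^ i) (ju a b) = ju (a + i) b" "(Dx ^^ i) (jp a b) = jp (a + i) b" for a b
    by (induction i) (simp_all add: Dx_jet_coords)
  moreover have "(Dy ^^ j) (ju a b) = ju a (b + j)" "(Dy ^^ j) (jp a b) = jp a (b + j)" for a b
    by (induction j) (simp_all add: Dy_jet_coords)
  ultimately show "Dsig (i, j) (ju a b) = ju (a + i) (b + j)" "Dsig (i, j) (jp a b) = jp (a + i) (b + j)"
    by (simp_all add: Dsig_def)
qed

lemma Dsig_simps:
  "Dsig (0, 0) f = f" "Dsig (Suc i, j) f = Dx (Dsig (i, j) f)" "Dsig (0, Suc j) f = Dy (Dsig (0, j) f)"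
  by (simp_all add: Dsig_def)

lemma mkop_Cons: "mkop ((\<sigma>, b) # ps) \<tau> = (\<lambda>\<xi>. (if \<sigma> = \<tau> then b \<xi> else 0) + mkop ps \<tau> \<xi>)"
  by (simp add: mkop_def fun_eq_iff)

lemma sum_mkop:
  assumes "finite K" "fst ` set ps \<subseteq> K"
  shows "(\<Sum>\<sigma>\<in>K. mkop ps \<sigma> \<xi> * g \<sigma>) = (\<Sum>(\<tau>, a)\<leftarrow>ps. a \<xi> * g \<tau>)"
  using assms(2)
proof (induction ps)
  case Nil
  then show ?case by (simp add: mkop_def)
next
  case (Cons p ps)
  obtain \<tau> a where p: "p = (\<tau>, a)" by fastforce
  have "mkop (p # ps) \<sigma> \<xi> * g \<sigma> = (if \<tau> = \<sigma> then a \<xi> * g \<tau> else 0) + mkop ps \<sigma> \<xi> * g \<sigma>" for \<sigma>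
    by (simp add: mkop_Cons p distrib_right)
  with Cons assms(1) show ?case
    by (simp add: p sum.distrib sum.delta)
qed

lemma opsupp_mkop: "opsupp (mkop ps) \<subseteq> fst ` set ps"
proof
  fix \<sigma>
  assume "\<sigma> \<in> opsupp (mkop ps)"
  then obtain \<xi> where "mkop ps \<sigma> \<xi> \<noteq> 0"
    by (auto simp: opsupp_def)
  then show "\<sigma> \<in> fst ` set ps"
    by (induction ps) (auto simp: mkop_def split: if_splits)
qed

lemma apply_op_mkop: "apply_op (mkop ps) f = (\<lambda>\<xi>. \<Sum>(\<tau>, a)\<leftarrow>ps. a \<xi> * Dsig \<tau> f \<xi>)"
proof
  fix \<xi>
  have "apply_op (mkop ps) f \<xi> = (\<Sum>\<sigma>\<in>fst ` set ps. mkop ps \<sigma> \<xi> * Dsig \<sigma> f \<xi>)"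
    unfolding apply_op_def using opsupp_mkop
    by (intro sum.mono_neutral_left) (auto simp: opsupp_def)
  then show "apply_op (mkop ps) f \<xi> = (\<Sum>(\<tau>, a)\<leftarrow>ps. a \<xi> * Dsig \<tau> f \<xi>)"
    by (simp add: sum_mkop)
qed

lemma mkop_notin: "\<tau> \<notin> fst ` set ps \<Longrightarrow> mkop ps \<tau> = (\<lambda>\<xi>. 0)"
  using opsupp_mkop by (auto simp: opsupp_def fun_eq_iff)

lemma mkop_distinct_keys:
  assumes "distinct (map fst ps)" "(\<tau>, a) \<in> set ps"
  shows "mkop ps \<tau> = a"
  using assms
proof (induction ps)
  case (Cons p ps)
  obtain \<sigma> b where p: "p = (\<sigma>, b)" by fastforce
  have "\<sigma> \<notin> fst ` set ps"
    using Cons.prems p by simp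
  moreover have "\<sigma> \<noteq> \<tau>" if "(\<tau>, a) \<in> set ps"
    using calculation that by force
  ultimately show ?case
    using Cons by (cases "(\<tau>, a) = (\<sigma>, b)") (auto simp: p mkop_Cons mkop_notin)
qed simp

lemma apply_adj_mkop:
  assumes "distinct (map fst ps)"
  shows "apply_adj (mkop ps) f =
    (\<lambda>\<xi>. \<Sum>(\<tau>, a)\<leftarrow>ps. (-1) ^ (fst \<tau> + snd \<tau>) * Dsig \<tau> (\<lambda>\<eta>. a \<eta> * f \<eta>) \<xi>)"
proof
  fix \<xi>
  define t where "t \<sigma> a = (-1) ^ (fst \<sigma> + snd \<sigma>) * Dsig \<sigma> (\<lambda>\<eta>. a \<eta> * f \<eta>) \<xi>" for \<sigma> a
  have "apply_adj (mkop ps) f \<xi> = (\<Sum>\<sigma>\<in>set (map fst ps). t \<sigma> (mkop ps \<sigma>))"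
    unfolding apply_adj_def t_def using opsupp_mkop
    by (intro sum.mono_neutral_left) (auto simp: opsupp_def Dsig_const_0)
  also have "\<dots> = (\<Sum>\<sigma>\<leftarrow>map fst ps. t \<sigma> (mkop ps \<sigma>))"
    using assms by (rule sum_list_distinct_conv_sum_set[symmetric])
  also have "\<dots> = (\<Sum>(\<tau>, a)\<leftarrow>ps. t \<tau> a)"
    unfolding map_map
    by (rule arg_cong[where f = sum_list], rule map_cong) (auto simp: mkop_distinct_keys[OF assms])
  finally show "apply_adj (mkop ps) f \<xi> = (\<Sum>(\<tau>, a)\<leftarrow>ps. t \<tau> a)" .
qed

lemma indep_p_const: "indep_p (\<lambda>\<xi>. k)"
  by (simp add: indep_p_def)

lemma indep_p_jet_coords: "indep_p jx" "indep_p jy" "indep_p (ju i j)"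
  by (auto simp: indep_p_def jx_def jy_def ju_def)

lemma indep_p_compose: "indep_p f \<Longrightarrow> indep_p (\<lambda>\<xi>. h (f \<xi>))"
  unfolding indep_p_def by metis

lemma indep_p_compose2: "indep_p f \<Longrightarrow> indep_p g \<Longrightarrow> indep_p (\<lambda>\<xi>. h (f \<xi>) (g \<xi>))"
  unfolding indep_p_def by metis

lemmas indep_p_arith = indep_p_compose2[where h = "(+)"] indep_p_compose2[where h = "(-)"]
  indep_p_compose2[where h = "(*)"] indep_p_compose[where h = uminus]

lemma is_cdop_mkop:
  assumes "\<And>\<tau> a. (\<tau>, a) \<in> set ps \<Longrightarrow> smooth_fn a \<and> indep_p a"
  shows "is_cdop (mkop ps)"
proof -
  have "smooth_fn (mkop ps \<sigma>) \<and> indep_p (mkop ps \<sigma>)" for \<sigma>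
    using assms
  proof (induction ps)
    case Nil
    then show ?case by (simp add: mkop_def smooth_fn_const indep_p_def)
  next
    case (Cons p ps)
    obtain \<tau> a where p: "p = (\<tau>, a)" by fastforce
    have "mkop (p # ps) \<sigma> = (if \<tau> = \<sigma> then (\<lambda>\<xi>. a \<xi> + mkop ps \<sigma> \<xi>) else mkop ps \<sigma>)"
      by (simp add: mkop_Cons p fun_eq_iff)
    moreover have "smooth_fn a" "indep_p a"
      using Cons.prems[of \<tau> a] p by simp_all
    moreover have "smooth_fn (mkop ps \<sigma>) \<and> indep_p (mkop ps \<sigma>)"
      by (rule Cons.IH) (use Cons.prems in auto)
    ultimately show ?case
      by (simp add: smooth_fn_add indep_p_arith)
  qed
  moreover have "finite (opsupp (mkop ps))"
    using opsupp_mkop finite_subset by blast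
  ultimately show ?thesis
    by (simp add: is_cdop_def)
qed

section \<open>The Laplace equation\<close>

definition laplacian :: "jfun \<Rightarrow> jfun" where
  "laplacian f = (\<lambda>\<xi>. Dx (Dx f) \<xi> + Dy (Dy f) \<xi>)"

lemma lin_laplace: "lin laplace = mkop [((2, 0), \<lambda>\<xi>. 1), ((0, 2), \<lambda>\<xi>. 1)]"
proof -
  have "pd c laplace = (\<lambda>\<xi>. if c = CU 2 0 \<or> c = CU 0 2 then 1 else 0)" for c
    by (rule pd_eqI) (auto simp: laplace_def ju_def intro!: derivative_eq_intros)
  then show ?thesis
    by (auto simp: fun_eq_iff lin_def mkop_def)
qed

lemma apply_op_lin_laplace: "apply_op (lin laplace) f = laplacian f"
  by (simp add: lin_laplace apply_op_mkop Dsig_simps numeral_eq_Suc laplacian_def)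

lemma apply_adj_lin_laplace: "apply_adj (lin laplace) f = laplacian f"
  by (simp add: lin_laplace apply_adj_mkop Dsig_simps numeral_eq_Suc laplacian_def)

lemma laplacian_jp: "laplacian (jp i j) = (\<lambda>\<xi>. jp (Suc (Suc i)) j \<xi> + jp i (Suc (Suc j)) \<xi>)"
  by (simp add: laplacian_def Dx_jet_coords Dy_jet_coords)

lemma onE_laplace_ju:
  assumes "onE laplace \<xi>"
  shows "ju (Suc (Suc i)) j \<xi> = - ju i (Suc (Suc j)) \<xi>"
proof -
  have "Dsig (i, j) laplace \<xi> = 0"
    using assms by (simp add: onE_def)
  then show ?thesis
    by (simp add: laplace_def Dsig_add smooth_fn_jet_coords Dsig_jet_coords eq_neg_iff_add_eq_0)
qed

lemma onTE_laplace_jp: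
  assumes "onTE laplace \<xi>"
  shows "jp (Suc (Suc i)) j \<xi> = - jp i (Suc (Suc j)) \<xi>"
proof -
  have "Dsig (i, j) (laplacian (jp 0 0)) \<xi> = 0"
    using assms by (simp add: onTE_def apply_op_lin_laplace pfun_def)
  then show ?thesis
    by (simp add: laplacian_jp Dsig_add smooth_fn_jet_coords Dsig_jet_coords eq_neg_iff_add_eq_0)
qed

lemma onTE_onE: "onTE F \<xi> \<Longrightarrow> onE F \<xi>"
  by (simp add: onTE_def onE_def)

lemma var_bivector_laplaceI:
  assumes "is_cdop H"
    and "\<And>\<xi>. onTE laplace \<xi> \<Longrightarrow> laplacian (apply_op H pfun) \<xi> = 0"
    and "\<And>\<phi> \<xi>. smooth_fn \<phi> \<Longrightarrow> onE laplace \<xi> \<Longrightarrow>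
      apply_adj H (laplacian \<phi>) \<xi> = laplacian (apply_op H \<phi>) \<xi>"
  shows "var_bivector laplace H"
  using assms by (simp add: var_bivector_def apply_op_lin_laplace apply_adj_lin_laplace)

lemmas B_defs = B0_def B1_def B2_def B3_def B4_def B5_def B6_def B7_def B8_def

lemma B_is_cdop:
  "is_cdop B0" "is_cdop B1" "is_cdop B2" "is_cdop B3" "is_cdop B4" "is_cdop B5" "is_cdop B6"
  "is_cdop B7" "is_cdop B8"
  unfolding B_defs
  by (intro is_cdop_mkop; auto intro!: smooth_fn_add smooth_fn_diff smooth_fn_minus smooth_fn_mult
      smooth_fn_const smooth_fn_jet_coords indep_p_arith indep_p_const indep_p_jet_coords)+

text \<open>With numeral_eq_Suc all indices are kept in Suc normal form, the form in which the
  total derivatives of the jet coordinates and the relations of the equations are stated.\<close>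

lemmas jet_calculus = laplacian_def apply_op_mkop apply_adj_mkop Dsig_simps numeral_eq_Suc pfun_def
  Dx_rules Dy_rules Dx_jet_coords Dy_jet_coords Dx_Dy_commute
  smooth_fn_add smooth_fn_diff smooth_fn_minus smooth_fn_mult smooth_fn_const smooth_fn_jet_coords
  smooth_fn_Dx smooth_fn_Dy

lemma B_cotangent_condition:
  assumes "onTE laplace \<xi>"
  shows "laplacian (apply_op B0 pfun) \<xi> = 0" "laplacian (apply_op B1 pfun) \<xi> = 0"
    "laplacian (apply_op B2 pfun) \<xi> = 0" "laplacian (apply_op B3 pfun) \<xi> = 0"
    "laplacian (apply_op B4 pfun) \<xi> = 0" "laplacian (apply_op B5 pfun) \<xi> = 0"
    "laplacian (apply_op B6 pfun) \<xi> = 0" "laplacian (apply_op B7 pfun) \<xi> = 0"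
    "laplacian (apply_op B8 pfun) \<xi> = 0"
  using onTE_laplace_jp[OF assms] onE_laplace_ju[OF onTE_onE[OF assms]]
  unfolding B_defs by (simp_all add: jet_calculus algebra_simps)

lemma B_intertwining:
  assumes "smooth_fn \<phi>" "onE laplace \<xi>"
  shows "apply_adj B0 (laplacian \<phi>) \<xi> = laplacian (apply_op B0 \<phi>) \<xi>"
    "apply_adj B1 (laplacian \<phi>) \<xi> = laplacian (apply_op B1 \<phi>) \<xi>"
    "apply_adj B2 (laplacian \<phi>) \<xi> = laplacian (apply_op B2 \<phi>) \<xi>"
    "apply_adj B3 (laplacian \<phi>) \<xi> = laplacian (apply_op B3 \<phi>) \<xi>"
    "apply_adj B4 (laplacian \<phi>) \<xi> = laplacian (apply_op B4 \<phi>) \<xi>"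
    "apply_adj B5 (laplacian \<phi>) \<xi> = laplacian (apply_op B5 \<phi>) \<xi>"
    "apply_adj B6 (laplacian \<phi>) \<xi> = laplacian (apply_op B6 \<phi>) \<xi>"
    "apply_adj B7 (laplacian \<phi>) \<xi> = laplacian (apply_op B7 \<phi>) \<xi>"
    "apply_adj B8 (laplacian \<phi>) \<xi> = laplacian (apply_op B8 \<phi>) \<xi>"
  using assms(1) onE_laplace_ju[OF assms(2)]
  unfolding B_defs by (simp_all add: jet_calculus algebra_simps)

theorem mainTheorem3:
  shows "var_bivector laplace B0 \<and> var_bivector laplace B1 \<and> var_bivector laplace B2 \<and>
         var_bivector laplace B3 \<and> var_bivector laplace B4 \<and> var_bivector laplace B5 \<and>
         var_bivector laplace B6 \<and> var_bivector laplace B7 \<and> var_bivector laplace B8"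
  by (intro conjI var_bivector_laplaceI B_is_cdop B_cotangent_condition B_intertwining)

end
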